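(* Let $\mathcal{H}$ be a complex Hilbert space, $A\in\mathcal{B}(\mathcal{H})$ positive and $S\in\mathcal{B}_A(\mathcal{H})$. For $a,b,c\in\mathcal{H}$ define $$\delta(a,b,c)=\begin{cases}\dfrac{\|b\|_A}{\|a\|_A}\left(|\langle a,c\rangle_A|\inf_{\lambda\in\mathbb{C}}\|c-\lambda b\|_A-\dfrac12\inf_{\mu\in\mathbb{C}}\|a-\mu b\|_A\right)^2 & \text{if } \|a\|_A\|b\|_A\neq 0,\\[2mm] 0 & \text{if } \|a\|_A\|b\|_A=0.\end{cases}$$ Then $$d\omega_A^2(S)\le \omega_A^2\left(S^{\sharp_A}S+S\right)+\omega_A\left(S^{\sharp_A}S^2\right)+\frac12\left\|\left(S^{\sharp_A}S\right)^2+S^{\sharp_A}S\right\|_A-2\inf_{\|z\|_A=1}\delta\left(S^{\sharp_A}Sz,\,Sz,\,z\right).$$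
   Context: $\mathcal{B}(\mathcal{H})$ denotes the bounded linear operators on $\mathcal{H}$. For positive $A$, $\langle x,z\rangle_A=\langle Ax,z\rangle$ and $\|z\|_A=\|A^{1/2}z\|$. $\mathcal{B}_A(\mathcal{H})$ is the set of $S\in\mathcal{B}(\mathcal{H})$ for which some $R\in\mathcal{B}(\mathcal{H})$ satisfies $AR=S^*A$; for such $S$, $S^{\sharp_A}=A^{\dagger}S^*A$ with $A^\dagger$ the Moore–Penrose inverse of $A$. For operators $T$ bounded with respect to $\|\cdot\|_A$: $\|T\|_A=\sup_{\|z\|_A=1}\|Tz\|_A$, $\omega_A(T)=\sup_{\|z\|_A=1}|\langle Tz,z\rangle_A|$, and $d\omega_A(T)=\sup_{\|z\|_A=1}(|\langle Tz,z\rangle_A|^2+\|Tz\|_A^4)^{1/2}$. *)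

theory Defs
  imports "HOL-Analysis.Analysis"
begin

text \<open>The library has no complex inner product spaces, so we introduce them:
  a complex vector space with an inner product linear in the first argument
  and conjugate-linear in the second (the paper's convention).\<close>

class complex_inner = ab_group_add +
  fixes scaleC :: "complex \<Rightarrow> 'a \<Rightarrow> 'a"
    and cinner :: "'a \<Rightarrow> 'a \<Rightarrow> complex"
  assumes scaleC_add_right: "scaleC a (x + y) = scaleC a x + scaleC a y"
    and scaleC_add_left: "scaleC (a + b) x = scaleC a x + scaleC b x"
    and scaleC_scaleC: "scaleC a (scaleC b x) = scaleC (a * b) x"
    and scaleC_one: "scaleC 1 x = x"
    and cinner_commute: "cinner x y = cnj (cinner y x)"
    and cinner_add_left: "cinner (x + y) z = cinner x z + cinner y z"
    and cinner_scaleC_left: "cinner (scaleC r x) y = r * cinner x y"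
    and cinner_self_nonneg: "0 \<le> Re (cinner x x)"
    and cinner_self_eq_zero: "cinner x x = 0 \<longleftrightarrow> x = 0"

definition cnorm :: "'a::complex_inner \<Rightarrow> real" where
  "cnorm x = sqrt (Re (cinner x x))"

class chilbert = complex_inner +
  assumes chilbert_complete:
    "\<And>X :: nat \<Rightarrow> 'a. (\<forall>e>0. \<exists>N. \<forall>m\<ge>N. \<forall>n\<ge>N. sqrt (Re (cinner (X m - X n) (X m - X n))) < e)
      \<Longrightarrow> (\<exists>L. \<forall>e>0. \<exists>N. \<forall>n\<ge>N. sqrt (Re (cinner (X n - L) (X n - L))) < e)"

definition bounded_op :: "('a::complex_inner \<Rightarrow> 'a) \<Rightarrow> bool" where
  "bounded_op T \<longleftrightarrow>
     (\<forall>x y. T (x + y) = T x + T y) \<and> (\<forall>c x. T (scaleC c x) = scaleC c (T x)) \<and>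
     (\<exists>K. \<forall>x. cnorm (T x) \<le> K * cnorm x)"

definition positive_op :: "('a::complex_inner \<Rightarrow> 'a) \<Rightarrow> bool" where
  "positive_op A \<longleftrightarrow> bounded_op A \<and>
     (\<forall>x. Im (cinner (A x) x) = 0 \<and> 0 \<le> Re (cinner (A x) x))"

definition adj :: "('a::complex_inner \<Rightarrow> 'a) \<Rightarrow> ('a \<Rightarrow> 'a)" where
  "adj S = (SOME T. bounded_op T \<and> (\<forall>x y. cinner (S x) y = cinner x (T y)))"

text \<open>Moore--Penrose inverse of A (densely defined on R(A) + R(A)-perp):
  for y = Ax + y2 with x in N(A)-perp and y2 in R(A)-perp, A-dagger y = x.\<close>
definition mp_inverse :: "('a::complex_inner \<Rightarrow> 'a) \<Rightarrow> 'a \<Rightarrow> 'a" where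
  "mp_inverse A y = (THE x. (\<forall>k. A k = 0 \<longrightarrow> cinner x k = 0) \<and>
      (\<exists>y2. (\<forall>w. cinner y2 (A w) = 0) \<and> y = A x + y2))"

definition in_BA :: "('a::complex_inner \<Rightarrow> 'a) \<Rightarrow> ('a \<Rightarrow> 'a) \<Rightarrow> bool" where
  "in_BA A S \<longleftrightarrow> bounded_op S \<and> (\<exists>R. bounded_op R \<and> (\<forall>x. A (R x) = adj S (A x)))"

definition sharpA :: "('a::complex_inner \<Rightarrow> 'a) \<Rightarrow> ('a \<Rightarrow> 'a) \<Rightarrow> ('a \<Rightarrow> 'a)" where
  "sharpA A S = (\<lambda>z. mp_inverse A (adj S (A z)))"

definition ipA :: "('a::complex_inner \<Rightarrow> 'a) \<Rightarrow> 'a \<Rightarrow> 'a \<Rightarrow> complex" where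
  "ipA A x z = cinner (A x) z"

definition normA :: "('a::complex_inner \<Rightarrow> 'a) \<Rightarrow> 'a \<Rightarrow> real" where
  "normA A z = sqrt (Re (cinner (A z) z))"

definition opnormA :: "('a::complex_inner \<Rightarrow> 'a) \<Rightarrow> ('a \<Rightarrow> 'a) \<Rightarrow> real" where
  "opnormA A T = (SUP z\<in>{z. normA A z = 1}. normA A (T z))"

definition omegaA :: "('a::complex_inner \<Rightarrow> 'a) \<Rightarrow> ('a \<Rightarrow> 'a) \<Rightarrow> real" where
  "omegaA A T = (SUP z\<in>{z. normA A z = 1}. cmod (ipA A (T z) z))"

definition domegaA :: "('a::complex_inner \<Rightarrow> 'a) \<Rightarrow> ('a \<Rightarrow> 'a) \<Rightarrow> real" where
  "domegaA A T = (SUP z\<in>{z. normA A z = 1}.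
      sqrt ((cmod (ipA A (T z) z))\<^sup>2 + (normA A (T z)) ^ 4))"

definition deltaA :: "('a::complex_inner \<Rightarrow> 'a) \<Rightarrow> 'a \<Rightarrow> 'a \<Rightarrow> 'a \<Rightarrow> real" where
  "deltaA A a b c =
     (if normA A a * normA A b \<noteq> 0 then
        normA A b / normA A a *
          (cmod (ipA A a c) * (INF l. normA A (c - scaleC l b))
            - 1/2 * (INF m. normA A (a - scaleC m b)))\<^sup>2
      else 0)"

end

theory Submission
  imports Defs
begin

text \<open>Fix \<open>z\<close> with \<open>||z||_A = 1\<close> and put \<open>a = S# S z\<close>, \<open>b = S z\<close>, where the A-adjoint \<open>S#\<close>
  is characterised by \<open><S# x, y>_A = <x, S y>_A\<close>. Since \<open><a, z>_A = ||b||_A^2\<close> is real,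
  \<open>|<b, z>_A|^2 + ||b||_A^4 = |<a + b, z>_A|^2 - 2 ||b||_A^2 Re <b, z>_A\<close>, which is at most
  \<open>|<a + b, z>_A|^2 + 2 |<a, z>_A| |<z, b>_A|\<close>. Splitting \<open>a\<close> and \<open>z\<close> into their components
  along \<open>b\<close> and orthogonal to \<open>b\<close> refines Buzano's inequality to
  \<open>|<a, z>_A| |<z, b>_A| <= (||a||_A ||b||_A + |<a, b>_A|) / 2 - delta(a, b, z)\<close>.
  Finally \<open>|<a, b>_A| = |<S# S^2 z, z>_A|\<close> and
  \<open>2 ||a||_A ||b||_A <= ||a||_A^2 + ||b||_A^2 = Re <((S# S)^2 + S# S) z, z>_A\<close>, which is at most
  \<open>||((S# S)^2 + S# S) z||_A\<close>; taking suprema over \<open>z\<close> gives the theorem.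

  The suprema are finite because \<open>S\<close> and \<open>S#\<close> are A-bounded: if \<open>A R = S* A\<close>, then \<open>R S\<close> is
  A-symmetric and bounded, and iterating \<open>||Q x||_A^2 <= ||Q^2 x||_A ||x||_A\<close> shows that every bounded
  A-symmetric \<open>Q\<close> is A-bounded. The identity \<open>A S# = S* A\<close> needs \<open>A A^+ A = A\<close> for the
  Moore-Penrose inverse, which, like the existence of \<open>S*\<close>, comes from the projection theorem.\<close>

section \<open>Semi-inner products\<close>

interpretation scaleC: module "scaleC :: complex \<Rightarrow> 'a::complex_inner \<Rightarrow> 'a"
  by unfold_locales (rule scaleC_add_right scaleC_add_left scaleC_scaleC scaleC_one)+

text \<open>The scalar core of the refined Buzano inequality below, with \<open>\<alpha> = ||a||\<close>, \<open>\<beta> = ||b||\<close>,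
  \<open>p = |<a, c>|\<close>, \<open>q = |<c, b>|\<close>, \<open>\<gamma> = |<a, b>|\<close> for a unit vector \<open>c\<close>, and \<open>dc\<close>, \<open>da\<close> the
  distances of \<open>c\<close> and \<open>a\<close> from the line through \<open>b\<close>.\<close>
lemma refined_buzano_real:
  fixes \<alpha> \<beta> p q \<gamma> dc da :: real
  assumes \<alpha>: "0 < \<alpha>" and \<beta>: "0 < \<beta>" and p: "0 \<le> p"
    and dc: "dc\<^sup>2 = 1 - q\<^sup>2 / \<beta>\<^sup>2" and da: "da\<^sup>2 = \<alpha>\<^sup>2 - \<gamma>\<^sup>2 / \<beta>\<^sup>2"
    and p_le: "p \<le> \<gamma> * q / \<beta>\<^sup>2 + da * dc"
  shows "p * q \<le> 1/2 * (\<alpha> * \<beta> + \<gamma>) - \<beta> / \<alpha> * (p * dc - 1/2 * da)\<^sup>2"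
proof -
  define q' g' where "q' = q / \<beta>" and "g' = \<gamma> / \<beta>"
  have q: "q = \<beta> * q'" and g: "\<gamma> = \<beta> * g'"
    using \<beta> by (simp_all add: q'_def g'_def)
  have dc': "dc\<^sup>2 = 1 - q'\<^sup>2" and da': "da\<^sup>2 = \<alpha>\<^sup>2 - g'\<^sup>2"
    using dc da \<beta> by (simp_all add: q g power_mult_distrib)
  have "(p * dc - 1/2 * da)\<^sup>2 = p\<^sup>2 * dc\<^sup>2 - p * dc * da + 1/4 * da\<^sup>2"
    by (simp add: power2_eq_square algebra_simps)
  also have "\<dots> = p\<^sup>2 * (1 - q'\<^sup>2) - p * dc * da + 1/4 * (\<alpha>\<^sup>2 - g'\<^sup>2)"
    by (simp only: dc' da')
  finally have "1/2 * \<alpha> * (\<alpha> + g') - \<alpha> * p * q' - (p * dc - 1/2 * da)\<^sup>2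
      = (1/2 * (\<alpha> + g') - p * q')\<^sup>2 + p * (g' * q' + da * dc - p)"
    by (simp add: power2_eq_square algebra_simps) (simp add: field_simps)
  moreover have "p \<le> g' * q' + da * dc"
    using p_le \<beta> by (simp add: q g power2_eq_square)
  then have "0 \<le> p * (g' * q' + da * dc - p)"
    using p by simp
  ultimately have "\<alpha> * p * q' \<le> 1/2 * \<alpha> * (\<alpha> + g') - (p * dc - 1/2 * da)\<^sup>2"
    using zero_le_power2[of "1/2 * (\<alpha> + g') - p * q'"] by linarith
  then have "\<beta> / \<alpha> * (\<alpha> * p * q') \<le> \<beta> / \<alpha> * (1/2 * \<alpha> * (\<alpha> + g') - (p * dc - 1/2 * da)\<^sup>2)"
    using \<alpha> \<beta> by (intro mult_left_mono) auto
  then show ?thesis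
    using \<alpha> \<beta> by (simp add: q g field_simps)
qed

lemma le_one_if_pow_two_pow_bounded:
  fixes r B :: real
  assumes "\<And>n. r ^ 2 ^ n \<le> B"
  shows "r \<le> 1"
proof (rule ccontr)
  assume r: "\<not> r \<le> 1"
  then obtain n where "B < r ^ n"
    using real_arch_pow[of r B] by auto
  also have "\<dots> \<le> r ^ 2 ^ n"
    using r by (intro power_increasing) (simp_all add: less_imp_le)
  finally show False
    using assms[of n] by simp
qed

locale semi_inner_product =
  fixes h :: "'a::complex_inner \<Rightarrow> 'a \<Rightarrow> complex"
  assumes h_add_left: "h (x + y) z = h x z + h y z"
    and h_scaleC_left: "h (scaleC r x) y = r * h x y"
    and h_commute: "h x y = cnj (h y x)"
    and h_self_nonneg: "0 \<le> Re (h x x)"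
begin

definition nrm :: "'a \<Rightarrow> real" where
  "nrm x = sqrt (Re (h x x))"

lemma h_add_right: "h x (y + z) = h x y + h x z"
  by (metis h_commute h_add_left complex_cnj_add)

lemma h_scaleC_right: "h x (scaleC r y) = cnj r * h x y"
  by (metis h_commute h_scaleC_left complex_cnj_mult)

lemma h_zero_left [simp]: "h 0 y = 0"
  and h_diff_left: "h (x - x') y = h x y - h x' y"
proof -
  interpret additive "\<lambda>x. h x y" by standard (rule h_add_left)
  show "h 0 y = 0" by (rule zero)
  show "h (x - x') y = h x y - h x' y" by (rule diff)
qed

lemma h_zero_right [simp]: "h x 0 = 0"
  and h_minus_right: "h x (- y) = - h x y"
  and h_diff_right: "h x (y - y') = h x y - h x y'"
proof -
  interpret additive "\<lambda>y. h x y" by standard (rule h_add_right)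
  show "h x 0 = 0" by (rule zero)
  show "h x (- y) = - h x y" by (rule minus)
  show "h x (y - y') = h x y - h x y'" by (rule diff)
qed

lemma nrm_nonneg: "0 \<le> nrm x"
  using h_self_nonneg[of x] by (simp add: nrm_def)

lemma nrm_sq: "(nrm x)\<^sup>2 = Re (h x x)"
  using h_self_nonneg[of x] by (simp add: nrm_def)

lemma h_self: "h x x = of_real ((nrm x)\<^sup>2)"
proof -
  have "Im (h x x) = - Im (h x x)"
    using arg_cong[OF h_commute[of x x], of Im] by simp
  then have "Im (h x x) = 0"
    by simp
  then show ?thesis by (simp add: nrm_sq complex_eq_iff)
qed

lemma cmod_h_commute: "cmod (h x y) = cmod (h y x)"
  using h_commute[of x y] by simp

lemma nrm_add_sq: "(nrm (x + y))\<^sup>2 = (nrm x)\<^sup>2 + 2 * Re (h x y) + (nrm y)\<^sup>2"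
  using h_commute[of y x] by (simp add: nrm_sq h_add_left h_add_right)

lemma nrm_scaleC: "nrm (scaleC c x) = cmod c * nrm x"
proof -
  have "h (scaleC c x) (scaleC c x) = (c * cnj c) * h x x"
    by (simp add: h_scaleC_left h_scaleC_right mult.assoc)
  also have "\<dots> = of_real ((cmod c)\<^sup>2) * h x x"
    by (simp only: complex_norm_square)
  finally have "h (scaleC c x) (scaleC c x) = of_real ((cmod c)\<^sup>2) * h x x" .
  then show ?thesis by (simp add: nrm_def real_sqrt_mult)
qed

lemma nrm_minus: "nrm (- x) = nrm x"
  using nrm_scaleC[of "-1" x] by simp

lemma nrm_commute: "nrm (x - y) = nrm (y - x)"
  using nrm_minus[of "x - y"] by simp

lemma h_proj_orthogonal:
  assumes "0 < nrm b"
  shows "h (u - scaleC (h u b / h b b) b) b = 0"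
  using assms by (simp add: h_self h_diff_left h_scaleC_left)

lemma nrm_proj_sq:
  assumes "0 < nrm b"
  shows "(nrm (u - scaleC (h u b / h b b) b))\<^sup>2 = (nrm u)\<^sup>2 - (cmod (h u b))\<^sup>2 / (nrm b)\<^sup>2"
proof -
  define u' where "u' = u - scaleC (h u b / h b b) b"
  have "h u' b = 0"
    unfolding u'_def by (rule h_proj_orthogonal[OF assms])
  then have "h u' u' = h u u - h u b * cnj (h u b) / h b b"
    by (simp add: u'_def h_diff_left h_diff_right h_scaleC_left h_scaleC_right h_commute[of b u])
  also have "\<dots> = of_real ((nrm u)\<^sup>2 - (cmod (h u b))\<^sup>2 / (nrm b)\<^sup>2)"
    by (simp add: h_self complex_norm_square del: of_real_power)
  finally show ?thesis
    by (simp add: nrm_sq u'_def)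
qed

lemma cauchy_schwarz: "cmod (h x y) \<le> nrm x * nrm y"
proof (cases "nrm y = 0")
  case True
  have "h x y = 0"
  proof (rule ccontr)
    assume ne: "h x y \<noteq> 0"
    \<comment> \<open>As \<open>h y y = 0\<close>, \<open>h (x - t y) (x - t y)\<close> is affine in \<open>t\<close>; this \<open>t\<close> makes it negative.\<close>
    define t where "t = of_real ((nrm x)\<^sup>2 + 1) / cnj (h x y)"
    have "h (x - scaleC t y) (x - scaleC t y) = h x x - cnj t * h x y - t * h y x + t * cnj t * h y y"
      by (simp add: h_diff_left h_diff_right h_scaleC_left h_scaleC_right algebra_simps)
    also have "\<dots> = h x x - cnj t * h x y - t * cnj (h x y)"
      using True by (simp add: h_self flip: h_commute)
    also have "\<dots> = - of_real ((nrm x)\<^sup>2 + 2)"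
      using ne by (simp add: t_def h_self)
    finally have "Re (h (x - scaleC t y) (x - scaleC t y)) = - ((nrm x)\<^sup>2 + 2)"
      by simp
    then show False
      using h_self_nonneg[of "x - scaleC t y"] zero_le_power2[of "nrm x"] by linarith
  qed
  then show ?thesis
    using nrm_nonneg[of x] True by simp
next
  case False
  then have pos: "0 < nrm y"
    using nrm_nonneg[of y] by simp
  have "(cmod (h x y))\<^sup>2 / (nrm y)\<^sup>2 \<le> (nrm x)\<^sup>2"
    using nrm_proj_sq[OF pos, of x] zero_le_power2[of "nrm (x - scaleC (h x y / h y y) y)"]
    by linarith
  then have "(cmod (h x y))\<^sup>2 \<le> (nrm x * nrm y)\<^sup>2"
    using pos by (simp add: divide_le_eq power_mult_distrib)
  then show ?thesis
    using nrm_nonneg[of x] nrm_nonneg[of y] by (meson power2_le_imp_le mult_nonneg_nonneg)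
qed

lemma h_eq_0_if_nrm_left: "nrm x = 0 \<Longrightarrow> h x y = 0"
  and h_eq_0_if_nrm_right: "nrm y = 0 \<Longrightarrow> h x y = 0"
  using cauchy_schwarz[of x y] by simp_all

lemma nrm_triangle: "nrm (x + y) \<le> nrm x + nrm y"
proof -
  have "Re (h x y) \<le> nrm x * nrm y"
    using cauchy_schwarz[of x y] complex_Re_le_cmod[of "h x y"] by linarith
  then have "(nrm (x + y))\<^sup>2 \<le> (nrm x + nrm y)\<^sup>2"
    by (simp add: nrm_add_sq power2_sum)
  then show ?thesis
    using nrm_nonneg[of x] nrm_nonneg[of y] by (meson power2_le_imp_le add_nonneg_nonneg)
qed

lemma parallelogram: "(nrm (x + y))\<^sup>2 + (nrm (x - y))\<^sup>2 = 2 * (nrm x)\<^sup>2 + 2 * (nrm y)\<^sup>2"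
  using nrm_add_sq[of x y] nrm_add_sq[of x "- y"] by (simp add: nrm_minus h_minus_right)

lemma pythagoras: "h x y = 0 \<Longrightarrow> (nrm (x + y))\<^sup>2 = (nrm x)\<^sup>2 + (nrm y)\<^sup>2"
  by (simp add: nrm_add_sq)

lemma apollonius:
  "(nrm (y - z))\<^sup>2 = 2 * (nrm (x - y))\<^sup>2 + 2 * (nrm (x - z))\<^sup>2 - 4 * (nrm (x - scaleC (1/2) (y + z)))\<^sup>2"
proof -
  have "scaleC 2 x = x + x"
    using scaleC_add_left[of 1 1 x] by simp
  then have "(x - y) + (x - z) = scaleC 2 (x - scaleC (1/2) (y + z))"
    by (simp add: scaleC.scale_right_diff_distrib)
  moreover have "(x - y) - (x - z) = - (y - z)"
    by simp
  ultimately show ?thesis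
    using parallelogram[of "x - y" "x - z"]
    by (simp add: nrm_scaleC nrm_minus power_mult_distrib nrm_commute[of z y])
qed

lemma h_eq_0_if_minimal:
  assumes min: "\<And>t. nrm u \<le> nrm (u - scaleC t k)"
  shows "h u k = 0"
proof (cases "nrm k = 0")
  case False
  then have pos: "0 < nrm k"
    using nrm_nonneg[of k] by simp
  have "(nrm u)\<^sup>2 \<le> (nrm (u - scaleC (h u k / h k k) k))\<^sup>2"
    using min nrm_nonneg by (simp add: power_mono)
  then have "(cmod (h u k))\<^sup>2 / (nrm k)\<^sup>2 \<le> 0"
    unfolding nrm_proj_sq[OF pos] by simp
  then show ?thesis
    using pos by (simp add: divide_le_0_iff)
qed (rule h_eq_0_if_nrm_right)

lemma INF_nrm_diff_scaleC:
  assumes pos: "0 < nrm b"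
  shows "(INF l. nrm (u - scaleC l b)) = nrm (u - scaleC (h u b / h b b) b)"
proof (rule cInf_eq_minimum)
  define l0 where "l0 = h u b / h b b"
  show "nrm (u - scaleC l0 b) \<in> range (\<lambda>l. nrm (u - scaleC l b))"
    by simp
  fix r assume "r \<in> range (\<lambda>l. nrm (u - scaleC l b))"
  then obtain l where r: "r = nrm (u - scaleC l b)"
    by blast
  have "h (u - scaleC l0 b) (scaleC (l0 - l) b) = 0"
    using h_proj_orthogonal[OF pos, of u] by (simp add: l0_def h_scaleC_right)
  then have "(nrm (u - scaleC l b))\<^sup>2 = (nrm (u - scaleC l0 b))\<^sup>2 + (nrm (scaleC (l0 - l) b))\<^sup>2"
    using pythagoras[of "u - scaleC l0 b" "scaleC (l0 - l) b"] by (simp add: algebra_simps)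
  then have "(nrm (u - scaleC l0 b))\<^sup>2 \<le> r\<^sup>2"
    unfolding r by simp
  then show "nrm (u - scaleC l0 b) \<le> r"
    by (rule power2_le_imp_le) (simp add: r nrm_nonneg)
qed

lemma refined_buzano:
  assumes c: "nrm c = 1" and a: "0 < nrm a" and b: "0 < nrm b"
  shows "cmod (h a c) * cmod (h c b) \<le> 1/2 * (nrm a * nrm b + cmod (h a b))
     - nrm b / nrm a * (cmod (h a c) * (INF l. nrm (c - scaleC l b))
         - 1/2 * (INF m. nrm (a - scaleC m b)))\<^sup>2"
proof -
  define a' c' where "a' = a - scaleC (h a b / h b b) b" and "c' = c - scaleC (h c b / h b b) b"
  have "h a' c' = h a' c"
    using h_proj_orthogonal[OF b, of a] by (simp add: a'_def c'_def h_diff_right h_scaleC_right)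
  also have "\<dots> = h a c - h a b * h b c / h b b"
    by (simp add: a'_def h_diff_left h_scaleC_left)
  finally have "h a c = h a' c' + h a b * h b c / h b b"
    by simp
  then have "cmod (h a c) \<le> cmod (h a' c') + cmod (h a b * h b c / h b b)"
    by (simp add: norm_triangle_ineq)
  also have "cmod (h a b * h b c / h b b) = cmod (h a b) * cmod (h c b) / (nrm b)\<^sup>2"
    by (simp add: h_self norm_mult norm_divide norm_power cmod_h_commute[of b c])
  finally have key: "cmod (h a c) \<le> cmod (h a b) * cmod (h c b) / (nrm b)\<^sup>2 + nrm a' * nrm c'"
    using cauchy_schwarz[of a' c'] by linarith
  have dc: "(nrm c')\<^sup>2 = 1 - (cmod (h c b))\<^sup>2 / (nrm b)\<^sup>2"
    using nrm_proj_sq[OF b, of c] c by (simp add: c'_def)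
  have da: "(nrm a')\<^sup>2 = (nrm a)\<^sup>2 - (cmod (h a b))\<^sup>2 / (nrm b)\<^sup>2"
    using nrm_proj_sq[OF b, of a] by (simp add: a'_def)
  show ?thesis
    unfolding INF_nrm_diff_scaleC[OF b] a'_def[symmetric] c'_def[symmetric]
    by (rule refined_buzano_real[OF a b norm_ge_zero dc da key])
qed

lemma cmod_sq_plus_nrm_pow4_le:
  assumes haz: "h a z = of_real ((nrm b)\<^sup>2)"
  shows "(cmod (h b z))\<^sup>2 + nrm b ^ 4 \<le> (cmod (h (a + b) z))\<^sup>2 + 2 * (cmod (h a z) * cmod (h z b))"
proof -
  define r where "r = (nrm b)\<^sup>2"
  have "(cmod (h (a + b) z))\<^sup>2 = (cmod (of_real r + h b z))\<^sup>2"
    by (simp add: h_add_left haz r_def)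
  also have "\<dots> = r\<^sup>2 + 2 * r * Re (h b z) + (cmod (h b z))\<^sup>2"
    by (simp only: cmod_power2) (simp add: power2_eq_square algebra_simps)
  finally have sq: "(cmod (h (a + b) z))\<^sup>2 = r\<^sup>2 + 2 * r * Re (h b z) + (cmod (h b z))\<^sup>2" .
  have "- Re (h b z) \<le> cmod (h z b)"
    using abs_Re_le_cmod[of "h b z"] cmod_h_commute[of z b] by linarith
  then have "- (r * Re (h b z)) \<le> r * cmod (h z b)"
    unfolding r_def by (metis mult_left_mono mult_minus_right zero_le_power2)
  moreover have "cmod (h a z) = r" and "nrm b ^ 4 = r\<^sup>2"
    by (simp_all add: haz r_def norm_power)
  ultimately show ?thesis
    unfolding sq by simp
qed

lemma symmetric_funpow:
  assumes sym: "\<And>u v. h (Q u) v = h u (Q v)"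
  shows "h ((Q ^^ k) u) v = h u ((Q ^^ k) v)"
proof (induction k arbitrary: u v)
  case (Suc k)
  have "h ((Q ^^ Suc k) u) v = h ((Q ^^ k) u) (Q v)"
    by (simp add: sym)
  also have "\<dots> = h u ((Q ^^ Suc k) v)"
    by (simp add: Suc.IH funpow_swap1)
  finally show ?case .
qed simp

lemma symmetric_nrm_sq_le:
  assumes sym: "\<And>u v. h (Q u) v = h u (Q v)"
  shows "(nrm (Q x))\<^sup>2 \<le> nrm (Q (Q x)) * nrm x"
proof -
  have "(nrm (Q x))\<^sup>2 = Re (h (Q (Q x)) x)"
    by (simp add: nrm_sq sym[of "Q x" x])
  also have "\<dots> \<le> cmod (h (Q (Q x)) x)"
    by (rule complex_Re_le_cmod)
  also have "\<dots> \<le> nrm (Q (Q x)) * nrm x"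
    by (rule cauchy_schwarz)
  finally show ?thesis .
qed

lemma symmetric_nrm_pow_le:
  assumes sym: "\<And>u v. h (Q u) v = h u (Q v)"
  shows "(nrm (Q x)) ^ 2 ^ n \<le> nrm ((Q ^^ 2 ^ n) x) * nrm x ^ (2 ^ n - 1)"
proof (induction n)
  case (Suc n)
  define N :: nat where "N = 2 ^ n"
  obtain M where M: "N = Suc M"
    by (cases N) (simp_all add: N_def)
  have N2: "2 ^ Suc n = N + N" and N2_1: "2 ^ Suc n - 1 = Suc (M + M)"
    using M by (simp_all add: N_def)
  have IH: "(nrm (Q x)) ^ N \<le> nrm ((Q ^^ N) x) * nrm x ^ M"
    using Suc.IH M by (simp add: N_def)
  have "(nrm (Q x)) ^ 2 ^ Suc n = ((nrm (Q x)) ^ N)\<^sup>2"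
    unfolding N2 by (simp add: power2_eq_square power_add)
  also have "\<dots> \<le> (nrm ((Q ^^ N) x) * nrm x ^ M)\<^sup>2"
    using IH by (intro power_mono) (simp_all add: nrm_nonneg)
  also have "\<dots> = (nrm ((Q ^^ N) x))\<^sup>2 * (nrm x ^ M * nrm x ^ M)"
    by (simp add: power2_eq_square)
  also have "\<dots> \<le> nrm ((Q ^^ N) ((Q ^^ N) x)) * nrm x * (nrm x ^ M * nrm x ^ M)"
    using symmetric_nrm_sq_le[of "Q ^^ N", OF symmetric_funpow[OF sym]]
    by (rule mult_right_mono) (simp add: nrm_nonneg)
  also have "\<dots> = nrm ((Q ^^ 2 ^ Suc n) x) * nrm x ^ (2 ^ Suc n - 1)"
    unfolding N2_1 unfolding N2 by (simp add: funpow_add power_add)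
  finally show ?case .
qed simp

text \<open>The spectral radius argument: the ratio \<open>nrm (Q x) / (K * nrm x)\<close> has bounded
  \<open>2 ^ n\<close>-th powers by the previous lemma.\<close>
lemma symmetric_nrm_le_growth:
  assumes sym: "\<And>u v. h (Q u) v = h u (Q v)" and K: "0 < K"
    and growth: "\<And>k. nrm ((Q ^^ k) x) \<le> C * K ^ k"
  shows "nrm (Q x) \<le> K * nrm x"
proof (cases "nrm x = 0")
  case True
  then have "(nrm (Q x))\<^sup>2 \<le> 0"
    using symmetric_nrm_sq_le[OF sym, of x] by simp
  then show ?thesis
    using True by simp
next
  case False
  then have x: "0 < nrm x"
    using nrm_nonneg[of x] by simp
  define \<rho> where "\<rho> = nrm (Q x) / (K * nrm x)"
  have "\<rho> ^ 2 ^ n \<le> C / nrm x" for n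
  proof -
    define N :: nat where "N = 2 ^ n"
    obtain M where M: "N = Suc M"
      by (cases N) (simp_all add: N_def)
    have "(\<rho> ^ N * nrm x) * (K ^ N * nrm x ^ M) = (nrm (Q x)) ^ N"
      using K x by (simp add: \<rho>_def M power_divide power_mult_distrib field_simps)
    also have "\<dots> \<le> nrm ((Q ^^ N) x) * nrm x ^ M"
      using symmetric_nrm_pow_le[OF sym, of x n] unfolding N_def[symmetric] by (simp add: M)
    also have "\<dots> \<le> C * K ^ N * nrm x ^ M"
      using growth[of N] by (rule mult_right_mono) (simp add: nrm_nonneg)
    finally have "\<rho> ^ N * nrm x \<le> C"
      using K x by (simp add: mult_le_cancel_right mult.assoc)
    then show ?thesis
      using x by (simp add: N_def pos_le_divide_eq)
  qed
  then have "\<rho> \<le> 1"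
    by (rule le_one_if_pow_two_pow_bounded)
  then show ?thesis
    using K x by (simp add: \<rho>_def divide_le_eq)
qed

lemma nrm_le_if_adjoint_bounded:
  assumes adj: "\<And>x y. h (T x) y = h x (S y)" and C: "0 \<le> C"
    and S: "\<And>y. nrm (S y) \<le> C * nrm y"
  shows "nrm (T x) \<le> C * nrm x"
proof (cases "nrm (T x) = 0")
  case True
  then show ?thesis
    using C nrm_nonneg[of x] by simp
next
  case False
  have "nrm (T x) * nrm (T x) = Re (h x (S (T x)))"
    using nrm_sq[of "T x"] adj[of x "T x"] by (simp add: power2_eq_square)
  also have "\<dots> \<le> cmod (h x (S (T x)))"
    by (rule complex_Re_le_cmod)
  also have "\<dots> \<le> nrm x * nrm (S (T x))"
    by (rule cauchy_schwarz)
  also have "\<dots> \<le> nrm x * (C * nrm (T x))"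
    by (rule mult_left_mono[OF S nrm_nonneg])
  finally have "nrm (T x) * nrm (T x) \<le> (C * nrm x) * nrm (T x)"
    by (simp only: ac_simps)
  then show ?thesis
    using False nrm_nonneg[of "T x"] by (auto intro: mult_right_le_imp_le)
qed

lemma nrm_le_if_sq_bounded:
  assumes eq: "h (S x) (S x) = h (Q x) x" and C: "0 \<le> C" and Q: "nrm (Q x) \<le> C * nrm x"
  shows "nrm (S x) \<le> sqrt C * nrm x"
proof -
  have "(nrm (S x))\<^sup>2 = Re (h (Q x) x)"
    by (simp add: nrm_sq eq)
  also have "\<dots> \<le> cmod (h (Q x) x)"
    by (rule complex_Re_le_cmod)
  also have "\<dots> \<le> nrm (Q x) * nrm x"
    by (rule cauchy_schwarz)
  also have "\<dots> \<le> C * nrm x * nrm x"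
    using Q nrm_nonneg[of x] by (rule mult_right_mono)
  also have "\<dots> = (sqrt C * nrm x)\<^sup>2"
    using C by (simp add: power_mult_distrib power2_eq_square)
  finally show ?thesis
    by (rule power2_le_imp_le) (simp add: C nrm_nonneg)
qed
end

section \<open>The projection and Riesz theorems\<close>

interpretation cinner: semi_inner_product "cinner :: 'a::complex_inner \<Rightarrow> 'a \<Rightarrow> complex"
  by unfold_locales (rule cinner_add_left cinner_scaleC_left cinner_commute cinner_self_nonneg)+

lemma cnorm_eq_nrm: "cnorm = cinner.nrm"
  by (simp add: fun_eq_iff cnorm_def cinner.nrm_def)

lemma cnorm_nonneg: "0 \<le> cnorm x"
  by (simp add: cnorm_eq_nrm cinner.nrm_nonneg)

lemma cnorm_eq_0_iff: "cnorm x = 0 \<longleftrightarrow> x = 0"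
  using cinner.h_self[of x] cinner_self_eq_zero[of x] by (auto simp: cnorm_eq_nrm)

lemma cinner_eqI: "(\<And>w. cinner w u = cinner w v) \<Longrightarrow> u = v"
  using cinner_self_eq_zero[of "u - v"] by (simp add: cinner.h_diff_right)

text \<open>\<open>chilbert\<close> is not an instance of \<open>metric_space\<close>, so convergence and closedness are
  expressed through \<open>cnorm\<close>.\<close>
definition cconverges :: "(nat \<Rightarrow> 'a::complex_inner) \<Rightarrow> 'a \<Rightarrow> bool" where
  "cconverges X L \<longleftrightarrow> (\<lambda>n. cnorm (X n - L)) \<longlonglongrightarrow> 0"

definition cclosed :: "'a::complex_inner set \<Rightarrow> bool" where
  "cclosed M \<longleftrightarrow> (\<forall>X L. (\<forall>n. X n \<in> M) \<longrightarrow> cconverges X L \<longrightarrow> L \<in> M)"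

definition csubspace :: "'a::complex_inner set \<Rightarrow> bool" where
  "csubspace M \<longleftrightarrow> 0 \<in> M \<and> (\<forall>x\<in>M. \<forall>y\<in>M. x + y \<in> M) \<and> (\<forall>x\<in>M. \<forall>c. scaleC c x \<in> M)"

lemma chilbert_cauchy_converges:
  fixes X :: "nat \<Rightarrow> 'a::chilbert"
  assumes "\<And>e. 0 < e \<Longrightarrow> \<exists>N. \<forall>m\<ge>N. \<forall>n\<ge>N. cnorm (X m - X n) < e"
  shows "\<exists>L. cconverges X L"
proof -
  obtain L where "\<forall>e>0. \<exists>N. \<forall>n\<ge>N. cnorm (X n - L) < e"
    using chilbert_complete[of X] assms unfolding cnorm_def by blast
  then have "cconverges X L"
    unfolding cconverges_def lim_sequentially by (simp add: cnorm_nonneg)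
  then show ?thesis ..
qed

lemma eventually_inverse_Suc_less:
  assumes "0 < e"
  obtains N where "\<And>n. N \<le> n \<Longrightarrow> inverse (real (Suc n)) < e"
  using LIMSEQ_inverse_real_of_nat assms unfolding lim_sequentially by fastforce

lemma minimizing_sequence_converges:
  fixes X :: "nat \<Rightarrow> 'a::chilbert"
  assumes mid: "\<And>m n. d \<le> (cnorm (x - scaleC (1/2) (X m + X n)))\<^sup>2"
    and X_lt: "\<And>n. (cnorm (x - X n))\<^sup>2 < d + inverse (real (Suc n))"
  shows "\<exists>L. cconverges X L"
proof (rule chilbert_cauchy_converges)
  fix e :: real
  assume e: "0 < e"
  obtain N where N: "\<And>n. N \<le> n \<Longrightarrow> inverse (real (Suc n)) < e\<^sup>2 / 4"
    by (rule eventually_inverse_Suc_less[of "e\<^sup>2 / 4"]) (use e in auto)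
  have "cnorm (X m - X n) < e" if "N \<le> m" "N \<le> n" for m n
  proof -
    have "(cnorm (X m - X n))\<^sup>2 < e\<^sup>2"
      using cinner.apollonius[of "X m" "X n" x] X_lt[of m] X_lt[of n] mid[of m n]
        N[OF that(1)] N[OF that(2)]
      unfolding cnorm_eq_nrm by linarith
    then show ?thesis
      by (rule power_less_imp_less_base) (use e in simp)
  qed
  then show "\<exists>N. \<forall>m\<ge>N. \<forall>n\<ge>N. cnorm (X m - X n) < e"
    by blast
qed

lemma cnorm_diff_tendsto:
  assumes "cconverges X L"
  shows "(\<lambda>n. cnorm (x - X n)) \<longlonglongrightarrow> cnorm (x - L)"
proof -
  have "(\<lambda>n. cnorm (x - X n) - cnorm (x - L)) \<longlonglongrightarrow> 0"
  proof (rule Lim_null_comparison)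
    have "\<bar>cnorm (x - X n) - cnorm (x - L)\<bar> \<le> cnorm (X n - L)" for n
      using cinner.nrm_triangle[of "x - L" "L - X n"] cinner.nrm_triangle[of "x - X n" "X n - L"]
      by (simp add: cnorm_eq_nrm cinner.nrm_commute[of L])
    then show "\<forall>\<^sub>F n in sequentially. norm (cnorm (x - X n) - cnorm (x - L)) \<le> cnorm (X n - L)"
      by simp
    show "(\<lambda>n. cnorm (X n - L)) \<longlonglongrightarrow> 0"
      using assms by (simp add: cconverges_def)
  qed
  then show ?thesis
    by (rule Lim_transform[OF tendsto_const])
qed

lemma closest_point_exists:
  fixes M :: "'a::chilbert set"
  assumes sub: "csubspace M" and cl: "cclosed M"
  shows "\<exists>m\<in>M. \<forall>k\<in>M. cnorm (x - m) \<le> cnorm (x - k)"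
proof -
  define d where "d = (INF m\<in>M. (cnorm (x - m))\<^sup>2)"
  have M: "M \<noteq> {}" and mid: "\<And>y z. y \<in> M \<Longrightarrow> z \<in> M \<Longrightarrow> scaleC (1/2) (y + z) \<in> M"
    using sub by (auto simp: csubspace_def)
  have bdd: "bdd_below ((\<lambda>m. (cnorm (x - m))\<^sup>2) ` M)"
    by (rule bdd_belowI2[of _ 0]) simp
  have d_le: "d \<le> (cnorm (x - m))\<^sup>2" if "m \<in> M" for m
    unfolding d_def using bdd that by (rule cINF_lower)
  have "\<exists>m\<in>M. (cnorm (x - m))\<^sup>2 < d + inverse (real (Suc n))" for n
    using cInf_lessD[of "(\<lambda>m. (cnorm (x - m))\<^sup>2) ` M" "d + inverse (real (Suc n))"] M
    by (simp add: d_def)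
  then obtain X where X: "\<And>n. X n \<in> M"
    and X_lt: "\<And>n. (cnorm (x - X n))\<^sup>2 < d + inverse (real (Suc n))"
    by metis
  obtain L where L: "cconverges X L"
    using minimizing_sequence_converges[OF d_le[OF mid[OF X X]] X_lt] by blast
  have "(\<lambda>n. (cnorm (x - X n))\<^sup>2) \<longlonglongrightarrow> (cnorm (x - L))\<^sup>2"
    using cnorm_diff_tendsto[OF L] by (rule tendsto_power)
  moreover have "(\<lambda>n. d + inverse (real (Suc n))) \<longlonglongrightarrow> d"
    using tendsto_add[OF tendsto_const LIMSEQ_inverse_real_of_nat] by simp
  ultimately have "(cnorm (x - L))\<^sup>2 \<le> d"
    using X_lt by (intro LIMSEQ_le) (auto intro: less_imp_le)
  then have "\<forall>k\<in>M. cnorm (x - L) \<le> cnorm (x - k)"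
    using d_le cnorm_nonneg by (meson order_trans power2_le_imp_le)
  moreover have "L \<in> M"
    using cl X L unfolding cclosed_def by blast
  ultimately show ?thesis
    by blast
qed

lemma orthogonal_projection_exists:
  fixes M :: "'a::chilbert set"
  assumes sub: "csubspace M" and cl: "cclosed M"
  shows "\<exists>m\<in>M. \<forall>k\<in>M. cinner (x - m) k = 0"
proof -
  obtain m where m: "m \<in> M" and min: "\<And>k. k \<in> M \<Longrightarrow> cnorm (x - m) \<le> cnorm (x - k)"
    using closest_point_exists[OF sub cl] by blast
  have "cinner (x - m) k = 0" if k: "k \<in> M" for k
  proof (rule cinner.h_eq_0_if_minimal)
    fix t
    have "m + scaleC t k \<in> M"
      using sub m k by (simp add: csubspace_def)
    then show "cinner.nrm (x - m) \<le> cinner.nrm (x - m - scaleC t k)"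
      using min by (simp add: cnorm_eq_nrm diff_diff_eq)
  qed
  then show ?thesis
    using m by blast
qed

lemma bounded_op_add: "bounded_op T \<Longrightarrow> T (x + y) = T x + T y"
  and bounded_op_scaleC: "bounded_op T \<Longrightarrow> T (scaleC c x) = scaleC c (T x)"
  by (simp_all add: bounded_op_def)

lemma bounded_op_diff:
  assumes "bounded_op T"
  shows "T (x - y) = T x - T y"
proof -
  interpret additive T
    by standard (rule bounded_op_add[OF assms])
  show ?thesis
    by (rule diff)
qed

lemma bounded_op_bound:
  assumes "bounded_op T"
  obtains K where "0 \<le> K" and "\<And>x. cnorm (T x) \<le> K * cnorm x"
proof -
  obtain K where K: "\<And>x. cnorm (T x) \<le> K * cnorm x"
    using assms by (auto simp: bounded_op_def)
  have "cnorm (T x) \<le> \<bar>K\<bar> * cnorm x" for x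
    using K[of x] cnorm_nonneg[of x] by (meson abs_ge_self mult_right_mono order_trans)
  then show ?thesis
    using that[of "\<bar>K\<bar>"] by simp
qed

lemma cclosed_functional_kernel:
  fixes f :: "'a::complex_inner \<Rightarrow> complex"
  assumes diff: "\<And>x y. f (x - y) = f x - f y" and bound: "\<And>x. cmod (f x) \<le> K * cnorm x"
  shows "cclosed {x. f x = 0}"
  unfolding cclosed_def
proof (intro allI impI)
  fix X L
  assume X: "\<forall>n. X n \<in> {x. f x = 0}" and L: "cconverges X L"
  have "cmod (f L) \<le> K * cnorm (X n - L)" for n
    using bound[of "X n - L"] X diff[of "X n" L] by simp
  moreover have "(\<lambda>n. K * cnorm (X n - L)) \<longlonglongrightarrow> 0"
    using L tendsto_mult_right_zero unfolding cconverges_def by blast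
  ultimately have "cmod (f L) \<le> 0"
    by (intro LIMSEQ_le_const) auto
  then show "L \<in> {x. f x = 0}"
    by simp
qed

lemma cclosed_kernel:
  assumes T: "bounded_op T"
  shows "cclosed {x. T x = 0}"
  unfolding cclosed_def
proof (intro allI impI)
  fix X L
  assume X: "\<forall>n. X n \<in> {x. T x = 0}" and L: "cconverges X L"
  obtain K where K: "\<And>x. cnorm (T x) \<le> K * cnorm x"
    using bounded_op_bound[OF T] by blast
  have "cnorm (T L) \<le> K * cnorm (X n - L)" for n
    using K[of "X n - L"] X bounded_op_diff[OF T, of "X n" L]
    by (simp add: cnorm_eq_nrm cinner.nrm_minus)
  moreover have "(\<lambda>n. K * cnorm (X n - L)) \<longlonglongrightarrow> 0"
    using L tendsto_mult_right_zero unfolding cconverges_def by blast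
  ultimately have "cnorm (T L) \<le> 0"
    by (intro LIMSEQ_le_const) auto
  then have "cnorm (T L) = 0"
    using cnorm_nonneg[of "T L"] by linarith
  then show "L \<in> {x. T x = 0}"
    by (simp add: cnorm_eq_0_iff)
qed

lemma csubspace_kernel:
  assumes T: "bounded_op T"
  shows "csubspace {x. T x = 0}"
proof -
  interpret additive T
    by standard (rule bounded_op_add[OF T])
  show ?thesis
    by (simp add: csubspace_def zero add bounded_op_scaleC[OF T])
qed

lemma functional_eq_cinner:
  fixes f :: "'a::complex_inner \<Rightarrow> complex"
  assumes diff: "\<And>x y. f (x - y) = f x - f y" and scale: "\<And>c x. f (scaleC c x) = c * f x"
    and v: "cinner v v \<noteq> 0" and orth: "\<And>k. f k = 0 \<Longrightarrow> cinner v k = 0"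
  shows "f x = cinner x (scaleC (cnj (f v / cinner v v)) v)"
proof -
  have "f (scaleC (f x) v - scaleC (f v) x) = 0"
    by (simp add: diff scale)
  then have "cinner v (scaleC (f x) v - scaleC (f v) x) = 0"
    by (rule orth)
  then have "cinner (scaleC (f x) v - scaleC (f v) x) v = 0"
    using cinner_commute by (metis complex_cnj_zero)
  then have "f x * cinner v v = f v * cinner x v"
    by (simp add: cinner.h_diff_left cinner_scaleC_left)
  then show ?thesis
    using v by (simp add: cinner.h_scaleC_right field_simps)
qed

lemma riesz_representation:
  fixes f :: "'a::chilbert \<Rightarrow> complex"
  assumes add: "\<And>x y. f (x + y) = f x + f y" and scale: "\<And>c x. f (scaleC c x) = c * f x"
    and bound: "\<And>x. cmod (f x) \<le> K * cnorm x"
  shows "\<exists>w. \<forall>x. f x = cinner x w"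
proof (cases "\<forall>x. f x = 0")
  case True
  then show ?thesis
    by (intro exI[of _ 0]) simp
next
  case False
  then obtain u where fu: "f u \<noteq> 0"
    by blast
  interpret additive f
    by standard (rule add)
  have "csubspace {x. f x = 0}"
    unfolding csubspace_def by (simp add: zero add scale)
  moreover have "cclosed {x. f x = 0}"
    using diff bound by (rule cclosed_functional_kernel)
  ultimately obtain m where m: "f m = 0" and orth: "\<And>k. f k = 0 \<Longrightarrow> cinner (u - m) k = 0"
    using orthogonal_projection_exists by blast
  have "f (u - m) \<noteq> 0"
    using fu m by (simp add: diff)
  then have "u - m \<noteq> 0"
    using zero by auto
  then have "cinner (u - m) (u - m) \<noteq> 0"
    by (simp add: cinner_self_eq_zero)
  then show ?thesis
    using functional_eq_cinner[OF diff scale _ orth] by blast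
qed

lemma bounded_op_if_adjoint:
  assumes S: "bounded_op S" and T: "\<And>x y. cinner (S x) y = cinner x (T y)"
  shows "bounded_op T"
  unfolding bounded_op_def
proof (intro conjI allI)
  show "T (x + y) = T x + T y" for x y
    by (rule cinner_eqI) (simp add: T[symmetric] cinner.h_add_right)
  show "T (scaleC c x) = scaleC c (T x)" for c x
    by (rule cinner_eqI) (simp add: T[symmetric] cinner.h_scaleC_right)
  obtain K where K0: "0 \<le> K" and K: "\<And>x. cinner.nrm (S x) \<le> K * cinner.nrm x"
    using bounded_op_bound[OF S] unfolding cnorm_eq_nrm by metis
  have "cinner (T x) y = cinner x (S y)" for x y
    by (metis T cinner_commute)
  then have "cinner.nrm (T y) \<le> K * cinner.nrm y" for y
    using K0 K by (rule cinner.nrm_le_if_adjoint_bounded)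
  then show "\<exists>K. \<forall>x. cnorm (T x) \<le> K * cnorm x"
    by (auto simp: cnorm_eq_nrm)
qed

lemma adjoint_exists:
  fixes S :: "'a::chilbert \<Rightarrow> 'a"
  assumes S: "bounded_op S"
  shows "\<exists>T. bounded_op T \<and> (\<forall>x y. cinner (S x) y = cinner x (T y))"
proof -
  obtain K where K: "\<And>x. cnorm (S x) \<le> K * cnorm x"
    using bounded_op_bound[OF S] by blast
  have "\<exists>w. \<forall>x. cinner (S x) y = cinner x w" for y
  proof (rule riesz_representation)
    show "cinner (S (x + z)) y = cinner (S x) y + cinner (S z) y" for x z
      by (simp add: bounded_op_add[OF S] cinner_add_left)
    show "cinner (S (scaleC c x)) y = c * cinner (S x) y" for c x
      by (simp add: bounded_op_scaleC[OF S] cinner_scaleC_left)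
    show "cmod (cinner (S x) y) \<le> (K * cnorm y) * cnorm x" for x
    proof -
      have "cmod (cinner (S x) y) \<le> cnorm (S x) * cnorm y"
        by (simp add: cnorm_eq_nrm cinner.cauchy_schwarz)
      also have "\<dots> \<le> (K * cnorm x) * cnorm y"
        using K[of x] cnorm_nonneg[of y] by (rule mult_right_mono)
      finally show ?thesis
        by (simp only: ac_simps)
    qed
  qed
  then obtain T where T: "\<And>x y. cinner (S x) y = cinner x (T y)"
    by metis
  then show ?thesis
    using bounded_op_if_adjoint[OF S] by blast
qed

lemma cinner_adj:
  fixes S :: "'a::chilbert \<Rightarrow> 'a"
  assumes "bounded_op S"
  shows "cinner (S x) y = cinner x (adj S y)"
  using someI_ex[OF adjoint_exists[OF assms]] unfolding adj_def by blast

section \<open>Positive operators and the A-adjoint\<close>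

lemma positive_op_hermitian:
  assumes A: "positive_op A"
  shows "cinner (A x) y = cnj (cinner (A y) x)"
proof -
  have B: "bounded_op A" and real: "\<And>z. Im (cinner (A z) z) = 0"
    using A by (auto simp: positive_op_def)
  define u v where "u = cinner (A x) y" and "v = cinner (A y) x"
  have "cinner (A (x + y)) (x + y) = cinner (A x) x + u + v + cinner (A y) y"
    by (simp add: u_def v_def bounded_op_add[OF B] cinner_add_left cinner.h_add_right)
  then have "Im u + Im v = 0"
    using real[of "x + y"] real[of x] real[of y] by simp
  moreover have "cinner (A (x + scaleC \<i> y)) (x + scaleC \<i> y)
      = cinner (A x) x - \<i> * u + \<i> * v + cinner (A y) y"
    by (simp add: u_def v_def bounded_op_add[OF B] bounded_op_scaleC[OF B] cinner_add_left
        cinner.h_add_right cinner_scaleC_left cinner.h_scaleC_right) (simp add: complex_eq_iff)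
  then have "Re v - Re u = 0"
    using real[of "x + scaleC \<i> y"] real[of x] real[of y] by simp
  ultimately show ?thesis
    by (simp add: u_def[symmetric] v_def[symmetric] complex_eq_iff)
qed

lemma semi_inner_product_ipA:
  assumes A: "positive_op A"
  shows "semi_inner_product (ipA A)"
proof
  have B: "bounded_op A"
    using A by (simp add: positive_op_def)
  show "ipA A (x + y) z = ipA A x z + ipA A y z" for x y z
    by (simp add: ipA_def bounded_op_add[OF B] cinner_add_left)
  show "ipA A (scaleC r x) y = r * ipA A x y" for r x y
    by (simp add: ipA_def bounded_op_scaleC[OF B] cinner_scaleC_left)
  show "ipA A x y = cnj (ipA A y x)" for x y
    unfolding ipA_def by (rule positive_op_hermitian[OF A])
  show "0 \<le> Re (ipA A x x)" for x
    using A by (simp add: ipA_def positive_op_def)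
qed

lemma mp_inverse_eqI:
  assumes A: "bounded_op A" and x: "\<And>k. A k = 0 \<Longrightarrow> cinner x k = 0"
  shows "mp_inverse A (A x) = x"
  unfolding mp_inverse_def
proof (rule the_equality)
  show "(\<forall>k. A k = 0 \<longrightarrow> cinner x k = 0) \<and> (\<exists>y2. (\<forall>w. cinner y2 (A w) = 0) \<and> A x = A x + y2)"
    using x by simp
next
  fix x'
  assume "(\<forall>k. A k = 0 \<longrightarrow> cinner x' k = 0) \<and> (\<exists>y2. (\<forall>w. cinner y2 (A w) = 0) \<and> A x = A x' + y2)"
  then obtain y2 where x': "\<And>k. A k = 0 \<Longrightarrow> cinner x' k = 0"
    and y2: "\<And>w. cinner y2 (A w) = 0" and eq: "A x = A x' + y2"
    by blast
  have "y2 = A (x - x')"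
    using eq by (simp add: bounded_op_diff[OF A])
  then have "y2 = 0"
    using y2[of "x - x'"] by (simp add: cinner_self_eq_zero)
  then have "A (x' - x) = 0"
    using eq by (simp add: bounded_op_diff[OF A])
  then have "cinner (x' - x) (x' - x) = 0"
    using x' x by (simp add: cinner.h_diff_left)
  then show "x' = x"
    by (simp add: cinner_self_eq_zero)
qed

lemma A_mp_inverse_A:
  fixes A :: "'a::chilbert \<Rightarrow> 'a"
  assumes A: "bounded_op A"
  shows "A (mp_inverse A (A y)) = A y"
proof -
  obtain m where m: "A m = 0" and orth: "\<And>k. A k = 0 \<Longrightarrow> cinner (y - m) k = 0"
    using orthogonal_projection_exists[OF csubspace_kernel[OF A] cclosed_kernel[OF A], of y] by blast
  have "A (y - m) = A y"
    using m by (simp add: bounded_op_diff[OF A])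
  moreover have "mp_inverse A (A (y - m)) = y - m"
    using A orth by (rule mp_inverse_eqI)
  ultimately show ?thesis
    by simp
qed

lemma A_sharpA:
  fixes A S :: "'a::chilbert \<Rightarrow> 'a"
  assumes A: "bounded_op A" and S: "in_BA A S"
  shows "A (sharpA A S z) = adj S (A z)"
proof -
  obtain R where AR: "\<And>x. A (R x) = adj S (A x)"
    using S by (auto simp: in_BA_def)
  show ?thesis
    using A_mp_inverse_A[OF A, of "R z"] by (simp add: sharpA_def AR)
qed

lemma ipA_A_adjoint:
  fixes A S R :: "'a::chilbert \<Rightarrow> 'a"
  assumes S: "bounded_op S" and AR: "\<And>x. A (R x) = adj S (A x)"
  shows "ipA A (R u) v = ipA A u (S v)"
proof -
  have "ipA A (R u) v = cnj (cinner v (adj S (A u)))"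
    by (simp add: ipA_def AR flip: cinner_commute)
  also have "\<dots> = ipA A u (S v)"
    by (simp add: ipA_def cinner_adj[OF S, symmetric] flip: cinner_commute)
  finally show ?thesis .
qed

definition A_bounded :: "('a::complex_inner \<Rightarrow> 'a) \<Rightarrow> ('a \<Rightarrow> 'a) \<Rightarrow> bool" where
  "A_bounded A T \<longleftrightarrow> (\<exists>C. \<forall>x. normA A (T x) \<le> C * normA A x)"

locale positive_operator =
  fixes A :: "'a::complex_inner \<Rightarrow> 'a"
  assumes positive: "positive_op A"
begin

sublocale A: semi_inner_product "ipA A"
  by (rule semi_inner_product_ipA[OF positive])

lemma normA_eq_nrm: "normA A = A.nrm"
  by (simp add: fun_eq_iff normA_def A.nrm_def ipA_def)

lemma normA_nonneg: "0 \<le> normA A x"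
  by (simp add: normA_eq_nrm A.nrm_nonneg)

lemma deltaA_nonneg: "0 \<le> deltaA A a b c"
  by (simp add: deltaA_def normA_nonneg)

lemma A_bounded_nonneg:
  assumes "A_bounded A T"
  obtains C where "0 \<le> C" and "\<And>x. normA A (T x) \<le> C * normA A x"
proof -
  obtain C where C: "\<And>x. normA A (T x) \<le> C * normA A x"
    using assms by (auto simp: A_bounded_def)
  have "normA A (T x) \<le> \<bar>C\<bar> * normA A x" for x
    using C[of x] normA_nonneg[of x] by (meson abs_ge_self mult_right_mono order_trans)
  with abs_ge_zero show ?thesis
    by (rule that)
qed

lemma A_bounded_add:
  assumes "A_bounded A T" and "A_bounded A T'"
  shows "A_bounded A (\<lambda>x. T x + T' x)"
proof -
  obtain C C' where C: "\<And>x. normA A (T x) \<le> C * normA A x"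
    and C': "\<And>x. normA A (T' x) \<le> C' * normA A x"
    using assms by (auto simp: A_bounded_def)
  have "normA A (T x + T' x) \<le> (C + C') * normA A x" for x
    using A.nrm_triangle[of "T x" "T' x"] C[of x] C'[of x]
    by (simp add: normA_eq_nrm distrib_right)
  then show ?thesis
    unfolding A_bounded_def by blast
qed

lemma A_bounded_comp:
  assumes "A_bounded A T" and "A_bounded A T'"
  shows "A_bounded A (\<lambda>x. T (T' x))"
proof -
  obtain C where C0: "0 \<le> C" and C: "\<And>x. normA A (T x) \<le> C * normA A x"
    using A_bounded_nonneg[OF assms(1)] by blast
  obtain C' where C': "\<And>x. normA A (T' x) \<le> C' * normA A x"
    using assms(2) by (auto simp: A_bounded_def)
  have "normA A (T (T' x)) \<le> (C * C') * normA A x" for x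
    using C[of "T' x"] mult_left_mono[OF C'[of x] C0] by (simp add: mult.assoc)
  then show ?thesis
    unfolding A_bounded_def by blast
qed

lemma omegaA_ge:
  assumes T: "A_bounded A T" and z: "normA A z = 1"
  shows "cmod (ipA A (T z) z) \<le> omegaA A T"
proof -
  obtain C where C: "\<And>x. normA A (T x) \<le> C * normA A x"
    using T by (auto simp: A_bounded_def)
  have "cmod (ipA A (T x) x) \<le> C" if "normA A x = 1" for x
    using A.cauchy_schwarz[of "T x" x] C[of x] that by (simp add: normA_eq_nrm)
  then show ?thesis
    unfolding omegaA_def using z by (intro cSUP_upper bdd_aboveI2[of _ _ C]) auto
qed

lemma opnormA_ge:
  assumes T: "A_bounded A T" and z: "normA A z = 1"
  shows "normA A (T z) \<le> opnormA A T"
proof -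
  obtain C where C: "\<And>x. normA A (T x) \<le> C * normA A x"
    using T by (auto simp: A_bounded_def)
  then have "normA A (T x) \<le> C" if "normA A x = 1" for x
    using that by (metis mult.right_neutral)
  then show ?thesis
    unfolding opnormA_def using z by (intro cSUP_upper bdd_aboveI2[of _ _ C]) auto
qed

lemma domegaA_sq_le:
  assumes z0: "normA A z0 = 1"
    and le: "\<And>z. normA A z = 1 \<Longrightarrow> (cmod (ipA A (T z) z))\<^sup>2 + normA A (T z) ^ 4 \<le> R"
  shows "(domegaA A T)\<^sup>2 \<le> R"
proof -
  define f where "f z = sqrt ((cmod (ipA A (T z) z))\<^sup>2 + normA A (T z) ^ 4)" for z
  have f_nonneg: "0 \<le> f z" for z
    by (simp add: f_def normA_nonneg)
  have f_le: "f z \<le> sqrt R" if "z \<in> {z. normA A z = 1}" for z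
    using le that by (simp add: f_def)
  have "domegaA A T \<le> sqrt R"
    unfolding domegaA_def f_def[symmetric] using z0 f_le by (auto intro: cSUP_least)
  moreover have "f z0 \<le> domegaA A T"
    unfolding domegaA_def f_def[symmetric] using z0 f_le
    by (intro cSUP_upper bdd_aboveI2[of _ _ "sqrt R"]) auto
  moreover have "0 \<le> R"
    using le[OF z0] zero_le_power2[of "cmod (ipA A (T z0) z0)"]
      zero_le_power[OF normA_nonneg[of "T z0"], of 4] by linarith
  ultimately show ?thesis
    using f_nonneg[of z0] by (metis order_trans power_mono real_sqrt_pow2)
qed

lemma unit_vector_exists:
  assumes "A \<noteq> (\<lambda>x. 0)"
  obtains z where "normA A z = 1"
proof -
  obtain x where x: "A x \<noteq> 0"
    using assms by blast
  have "A.nrm x \<noteq> 0"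
  proof
    assume "A.nrm x = 0"
    then have "ipA A x (A x) = 0"
      by (rule A.h_eq_0_if_nrm_left)
    then show False
      using x by (simp add: ipA_def cinner_self_eq_zero)
  qed
  then have "normA A (scaleC (of_real (1 / A.nrm x)) x) = 1"
    using A.nrm_nonneg[of x] by (simp add: normA_eq_nrm A.nrm_scaleC norm_divide)
  then show ?thesis
    by (rule that)
qed

lemma refined_buzano_deltaA:
  assumes c: "normA A c = 1"
  shows "cmod (ipA A a c) * cmod (ipA A c b)
    \<le> 1/2 * (normA A a * normA A b + cmod (ipA A a b)) - deltaA A a b c"
proof (cases "normA A a * normA A b = 0")
  case True
  then have "ipA A a c = 0 \<or> ipA A c b = 0"
    using A.h_eq_0_if_nrm_left[of a c] A.h_eq_0_if_nrm_right[of b c] by (auto simp: normA_eq_nrm)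
  moreover have "deltaA A a b c = 0"
    using True by (simp add: deltaA_def)
  ultimately show ?thesis
    using normA_nonneg[of a] normA_nonneg[of b] by auto
next
  case False
  then have "0 < A.nrm a" and "0 < A.nrm b"
    using A.nrm_nonneg[of a] A.nrm_nonneg[of b] by (auto simp: normA_eq_nrm less_le)
  then show ?thesis
    using A.refined_buzano[of c a b] c False by (simp add: deltaA_def normA_eq_nrm)
qed

lemma normA_le_cnorm:
  obtains K where "0 \<le> K" and "\<And>x. normA A x \<le> K * cnorm x"
proof -
  obtain KA where KA0: "0 \<le> KA" and KA: "\<And>x. cnorm (A x) \<le> KA * cnorm x"
    using positive bounded_op_bound by (auto simp: positive_op_def)
  have "normA A x \<le> sqrt KA * cnorm x" for x
  proof -
    have "(normA A x)\<^sup>2 \<le> cmod (cinner (A x) x)"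
      by (simp add: normA_eq_nrm A.nrm_sq ipA_def complex_Re_le_cmod)
    also have "\<dots> \<le> cnorm (A x) * cnorm x"
      by (simp add: cnorm_eq_nrm cinner.cauchy_schwarz)
    also have "\<dots> \<le> KA * cnorm x * cnorm x"
      using KA[of x] cnorm_nonneg[of x] by (rule mult_right_mono)
    also have "\<dots> = (sqrt KA * cnorm x)\<^sup>2"
      using KA0 by (simp add: power_mult_distrib power2_eq_square)
    finally show ?thesis
      by (rule power2_le_imp_le) (simp add: KA0 cnorm_nonneg)
  qed
  with real_sqrt_ge_zero[OF KA0] show ?thesis
    by (rule that)
qed

lemma A_bounded_if_symmetric:
  assumes sym: "\<And>u v. ipA A (Q u) v = ipA A u (Q v)" and K: "0 < K"
    and bound: "\<And>x. cnorm (Q x) \<le> K * cnorm x"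
  shows "A_bounded A Q"
proof -
  obtain KA where KA0: "0 \<le> KA" and KA: "\<And>x. normA A x \<le> KA * cnorm x"
    using normA_le_cnorm by blast
  have iterate: "cnorm ((Q ^^ k) x) \<le> K ^ k * cnorm x" for k x
  proof (induction k)
    case (Suc k)
    have "cnorm ((Q ^^ Suc k) x) \<le> K * cnorm ((Q ^^ k) x)"
      by (simp add: bound)
    also have "\<dots> \<le> K * (K ^ k * cnorm x)"
      using Suc.IH K by (simp add: mult_left_mono)
    finally show ?case
      by (simp add: mult.assoc)
  qed simp
  have "A.nrm (Q x) \<le> K * A.nrm x" for x
  proof (rule A.symmetric_nrm_le_growth[OF sym K])
    show "A.nrm ((Q ^^ k) x) \<le> (KA * cnorm x) * K ^ k" for k
      using KA[of "(Q ^^ k) x"] mult_left_mono[OF iterate[of k x] KA0]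
      by (simp add: normA_eq_nrm ac_simps)
  qed
  then show ?thesis
    by (auto simp: A_bounded_def normA_eq_nrm)
qed

end

section \<open>Bounds for the Davis-Wielandt radius\<close>

locale A_adjointable = positive_operator A for A :: "'a::chilbert \<Rightarrow> 'a" +
  fixes S :: "'a \<Rightarrow> 'a"
  assumes in_BA: "in_BA A S"
begin

lemma bounded_S: "bounded_op S"
  using in_BA by (simp add: in_BA_def)

lemma ipA_sharpA: "ipA A (sharpA A S u) v = ipA A u (S v)"
proof (rule ipA_A_adjoint[OF bounded_S])
  show "A (sharpA A S x) = adj S (A x)" for x
    using positive in_BA by (simp add: positive_op_def A_sharpA)
qed

lemma A_bounded_S: "A_bounded A S"
proof -
  obtain R where R: "bounded_op R" and AR: "\<And>x. A (R x) = adj S (A x)"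
    using in_BA by (auto simp: in_BA_def)
  have RS: "ipA A (R (S u)) v = ipA A (S u) (S v)" for u v
    by (rule ipA_A_adjoint[of S A R, OF bounded_S AR])
  have sym: "ipA A (R (S u)) v = ipA A u (R (S v))" for u v
    using RS[of u v] RS[of v u] A.h_commute by metis
  obtain KR KS where KR: "0 \<le> KR" "\<And>x. cnorm (R x) \<le> KR * cnorm x"
    and KS: "0 \<le> KS" "\<And>x. cnorm (S x) \<le> KS * cnorm x"
    using bounded_op_bound[OF R] bounded_op_bound[OF bounded_S] by metis
  have "cnorm (R (S x)) \<le> (KR * KS + 1) * cnorm x" for x
    using KR(2)[of "S x"] mult_left_mono[OF KS(2)[of x] KR(1)] cnorm_nonneg[of x]
    by (simp add: algebra_simps)
  moreover have "0 < KR * KS + 1"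
    using mult_nonneg_nonneg[OF KR(1) KS(1)] by linarith
  ultimately have "A_bounded A (\<lambda>x. R (S x))"
    using sym by (intro A_bounded_if_symmetric[of _ "KR * KS + 1"])
  then obtain C where C0: "0 \<le> C" and C: "\<And>x. A.nrm (R (S x)) \<le> C * A.nrm x"
    using A_bounded_nonneg unfolding normA_eq_nrm by metis
  have "A.nrm (S x) \<le> sqrt C * A.nrm x" for x
    using RS[of x x, symmetric] C0 C by (rule A.nrm_le_if_sq_bounded)
  then show ?thesis
    by (auto simp: A_bounded_def normA_eq_nrm)
qed

lemma A_bounded_sharpA: "A_bounded A (sharpA A S)"
proof -
  obtain C where C0: "0 \<le> C" and C: "\<And>x. A.nrm (S x) \<le> C * A.nrm x"
    using A_bounded_nonneg[OF A_bounded_S] unfolding normA_eq_nrm by metis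
  have "A.nrm (sharpA A S x) \<le> C * A.nrm x" for x
    using ipA_sharpA C0 C by (rule A.nrm_le_if_adjoint_bounded)
  then show ?thesis
    by (auto simp: A_bounded_def normA_eq_nrm)
qed

lemma domegaA_integrand_le:
  assumes z: "normA A z = 1"
  shows "(cmod (ipA A (S z) z))\<^sup>2 + normA A (S z) ^ 4
    \<le> (cmod (ipA A (sharpA A S (S z) + S z) z))\<^sup>2
       + cmod (ipA A (sharpA A S (S (S z))) z)
       + 1/2 * normA A (sharpA A S (S (sharpA A S (S z))) + sharpA A S (S z))
       - 2 * deltaA A (sharpA A S (S z)) (S z) z"
proof -
  define a b where "a = sharpA A S (S z)" and "b = S z"
  have az: "ipA A a z = of_real ((A.nrm b)\<^sup>2)"
    by (simp add: a_def b_def ipA_sharpA A.h_self)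
  have ab: "cmod (ipA A a b) = cmod (ipA A (sharpA A S (S (S z))) z)"
    by (simp add: a_def b_def ipA_sharpA A.cmod_h_commute)
  have "ipA A (sharpA A S (S a)) z = cnj (ipA A (S z) (S a))"
    by (simp add: ipA_sharpA flip: A.h_commute)
  also have "ipA A (S z) (S a) = ipA A a a"
    by (simp add: a_def ipA_sharpA)
  also have "\<dots> = of_real ((A.nrm a)\<^sup>2)"
    by (rule A.h_self)
  finally have "(A.nrm a)\<^sup>2 + (A.nrm b)\<^sup>2 = Re (ipA A (sharpA A S (S a) + a) z)"
    by (simp add: A.h_add_left az)
  also have "\<dots> \<le> A.nrm (sharpA A S (S a) + a)"
    using complex_Re_le_cmod[of "ipA A (sharpA A S (S a) + a) z"]
      A.cauchy_schwarz[of "sharpA A S (S a) + a" z] z by (simp add: normA_eq_nrm)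
  finally have am_gm: "2 * (A.nrm a * A.nrm b) \<le> A.nrm (sharpA A S (S a) + a)"
    using sum_squares_bound[of "A.nrm a" "A.nrm b"] by linarith
  have buzano: "cmod (ipA A a z) * cmod (ipA A z b)
      \<le> 1/2 * (A.nrm a * A.nrm b + cmod (ipA A a b)) - deltaA A a b z"
    using refined_buzano_deltaA[OF z, of a b] by (simp add: normA_eq_nrm)
  have "(cmod (ipA A b z))\<^sup>2 + A.nrm b ^ 4
      \<le> (cmod (ipA A (a + b) z))\<^sup>2 + 2 * (cmod (ipA A a z) * cmod (ipA A z b))"
    using az by (rule A.cmod_sq_plus_nrm_pow4_le)
  also have "\<dots> \<le> (cmod (ipA A (a + b) z))\<^sup>2 + (A.nrm a * A.nrm b + cmod (ipA A a b))
      - 2 * deltaA A a b z"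
    using buzano by (simp add: algebra_simps)
  finally show ?thesis
    using am_gm ab by (simp add: a_def b_def normA_eq_nrm)
qed

lemma domegaA_integrand_le_bound:
  assumes z: "normA A z = 1"
  shows "(cmod (ipA A (S z) z))\<^sup>2 + normA A (S z) ^ 4
    \<le> (omegaA A (\<lambda>z. sharpA A S (S z) + S z))\<^sup>2
       + omegaA A (\<lambda>z. sharpA A S (S (S z)))
       + 1/2 * opnormA A (\<lambda>z. sharpA A S (S (sharpA A S (S z))) + sharpA A S (S z))
       - 2 * (INF z\<in>{z. normA A z = 1}. deltaA A (sharpA A S (S z)) (S z) z)"
proof -
  have SS: "A_bounded A (\<lambda>z. sharpA A S (S z))"
    using A_bounded_sharpA A_bounded_S by (rule A_bounded_comp)
  have "cmod (ipA A (sharpA A S (S z) + S z) z) \<le> omegaA A (\<lambda>z. sharpA A S (S z) + S z)"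
    using A_bounded_add[OF SS A_bounded_S] z by (rule omegaA_ge)
  then have "(cmod (ipA A (sharpA A S (S z) + S z) z))\<^sup>2
      \<le> (omegaA A (\<lambda>z. sharpA A S (S z) + S z))\<^sup>2"
    by (rule power_mono) simp
  moreover have "cmod (ipA A (sharpA A S (S (S z))) z) \<le> omegaA A (\<lambda>z. sharpA A S (S (S z)))"
    using A_bounded_comp[OF SS A_bounded_S] z by (rule omegaA_ge)
  moreover have "normA A (sharpA A S (S (sharpA A S (S z))) + sharpA A S (S z))
      \<le> opnormA A (\<lambda>z. sharpA A S (S (sharpA A S (S z))) + sharpA A S (S z))"
    using A_bounded_add[OF A_bounded_comp[OF SS SS] SS] z by (rule opnormA_ge)
  moreover have "(INF z\<in>{z. normA A z = 1}. deltaA A (sharpA A S (S z)) (S z) z)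
      \<le> deltaA A (sharpA A S (S z)) (S z) z"
    using z by (intro cINF_lower bdd_belowI2[of _ 0] deltaA_nonneg) auto
  ultimately show ?thesis
    using domegaA_integrand_le[OF z] by linarith
qed

end

theorem theorem2p6:
  fixes A S :: "'a::chilbert \<Rightarrow> 'a"
  assumes "positive_op A"
    and "A \<noteq> (\<lambda>x. 0)"
    and "in_BA A S"
  shows "(domegaA A S)\<^sup>2
    \<le> (omegaA A (\<lambda>z. sharpA A S (S z) + S z))\<^sup>2
       + omegaA A (\<lambda>z. sharpA A S (S (S z)))
       + 1/2 * opnormA A (\<lambda>z. sharpA A S (S (sharpA A S (S z))) + sharpA A S (S z))
       - 2 * (INF z\<in>{z. normA A z = 1}. deltaA A (sharpA A S (S z)) (S z) z)"
proof -
  interpret A_adjointable A S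
    using assms(1,3) by unfold_locales
  obtain z0 where "normA A z0 = 1"
    using assms(2) by (rule unit_vector_exists)
  then show ?thesis
    using domegaA_integrand_le_bound by (rule domegaA_sq_le)
qed

end
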